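(* Let $\mathcal{B}$ be a front on $\mathbb{N}$. There is a Borel map $S:2^{\mathcal{B}}\times[\mathbb{N}]^{\omega}\to[\mathbb{N}]^{\omega}$ such that for every infinite $x\subseteq\mathbb{N}$ and every $\mathcal{F}\subseteq\mathcal{B}$, $S(\mathcal{F},x)$ is an infinite subset of $x$ satisfying $[S(\mathcal{F},x)]^{<\omega}\cap\mathcal{B}\subseteq\mathcal{F}$ or $[S(\mathcal{F},x)]^{<\omega}\cap\mathcal{F}=\emptyset$.
   Context: For finite $s$ and $t\subseteq\mathbb{N}$, $s\sqsubseteq t$ means $s=t\cap\{0,\dots,n\}$ for some $n$. A front on $\mathbb{N}$ is a family $\mathcal{B}\subseteq[\mathbb{N}]^{<\omega}$ of pairwise $\sqsubseteq$-incomparable sets such that every infinite $y\subseteq\mathbb{N}$ has an initial segment in $\mathcal{B}$. $[\mathbb{N}]^\omega$ is the space of infinite subsets of $\mathbb{N}$ (as a subspace of $2^{\mathbb{N}}$), and $2^{\mathcal{B}}$ is the Cantor space of subsets of $\mathcal{B}$. *)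

theory Defs
  imports "HOL-Analysis.Analysis"
begin

definition init_seg :: "nat set \<Rightarrow> nat set \<Rightarrow> bool" where
  "init_seg s t \<longleftrightarrow> (\<exists>n. s = t \<inter> {..<n})"

definition is_front :: "nat set set \<Rightarrow> bool" where
  "is_front B \<longleftrightarrow>
     (\<forall>s\<in>B. finite s) \<and>
     (\<forall>s\<in>B. \<forall>t\<in>B. init_seg s t \<longrightarrow> s = t) \<and>
     (\<forall>y. infinite y \<longrightarrow> (\<exists>s\<in>B. init_seg s y))"

definition borel_of :: "'a topology \<Rightarrow> 'a measure" where
  "borel_of X = sigma (topspace X) {U. openin X U}"

text \<open>Cantor space 2^I, realised as functions I \<Rightarrow> bool (extensional outside I)
  with the product of discrete topologies.\<close>
definition cantor_top :: "'i set \<Rightarrow> ('i \<Rightarrow> bool) topology" where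
  "cantor_top I = product_topology (\<lambda>_. discrete_topology (UNIV :: bool set)) I"

text \<open>The space [N]^omega of infinite subsets of N, as a subspace of 2^N
  (subsets represented by their characteristic functions).\<close>
definition inf_subsets_top :: "(nat \<Rightarrow> bool) topology" where
  "inf_subsets_top = subtopology (cantor_top UNIV) {f. infinite {n. f n}}"

end

theory Submission
  imports Defs
begin

text \<open>
  The selector is defined by well-founded recursion on the tree of proper initial segments of the
  front, in the style of Nash-Williams' proof. At a node \<open>s\<close> and on an infinite set \<open>x\<close> we
  diagonalise: \<open>n\<^sub>k\<close> is the least element of the current set \<open>z\<^sub>k\<close>, and \<open>z\<^sub>k\<^sub>+\<^sub>1\<close> is what the
  selector for the node \<open>s \<union> {n\<^sub>k}\<close> extracts from \<open>z\<^sub>k - {n\<^sub>k}\<close>, so that all extensions of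
  \<open>s \<union> {n\<^sub>k}\<close> into \<open>z\<^sub>k\<^sub>+\<^sub>1\<close> that lie in the front are either all in \<open>F\<close> or all outside \<open>F\<close>.
  Keeping the \<open>n\<^sub>k\<close> of the side that occurs infinitely often yields an infinite set homogeneous
  at \<open>s\<close>. Every step only uses countable quantifiers over the coordinates of \<open>F\<close> and \<open>x\<close>, so
  membership in the selected set is a Borel property of \<open>(F, x)\<close>.
\<close>

definition less_sets :: "nat set \<Rightarrow> nat set \<Rightarrow> bool" where
  "less_sets s u \<longleftrightarrow> (\<forall>a\<in>s. \<forall>b\<in>u. a < b)"

definition front_tree :: "nat set set \<Rightarrow> nat set set" where
  "front_tree B = {s. \<exists>b\<in>B. init_seg s b \<and> s \<noteq> b}"

definition front_tree_succ :: "nat set set \<Rightarrow> (nat set \<times> nat set) set" where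
  "front_tree_succ B = {(insert a s, s) | s a. s \<in> front_tree B \<and> less_sets s {a}}"

definition is_least :: "nat \<Rightarrow> nat set \<Rightarrow> bool" where
  "is_least a z \<longleftrightarrow> a \<in> z \<and> (\<forall>b<a. b \<notin> z)"

definition homogeneous :: "nat set set \<Rightarrow> nat set \<Rightarrow> nat set set \<Rightarrow> nat set \<Rightarrow> bool" where
  "homogeneous B s F y \<longleftrightarrow>
     (\<forall>u. finite u \<and> u \<subseteq> y \<and> less_sets s u \<and> s \<union> u \<in> B \<longrightarrow> s \<union> u \<in> F) \<or>
     (\<forall>u. finite u \<and> u \<subseteq> y \<and> less_sets s u \<and> s \<union> u \<in> B \<longrightarrow> s \<union> u \<notin> F)"

type_synonym selector = "nat set set \<Rightarrow> nat set \<Rightarrow> nat set"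

text \<open>
  The guard \<open>less_sets s {a}\<close> makes the construction depend on \<open>G\<close> only at points above \<open>s\<close>,
  i.e.\ only on the children of \<open>s\<close> in the tree, as the well-founded recursion requires.
\<close>
definition diag_step :: "nat set \<Rightarrow> (nat \<Rightarrow> selector) \<Rightarrow> nat set set \<Rightarrow> nat set \<Rightarrow> nat set" where
  "diag_step s G F z =
     (if z = {} then {}
      else if less_sets s {LEAST a. a \<in> z} then G (LEAST a. a \<in> z) F (z - {LEAST a. a \<in> z})
      else {})"

primrec diag_seq :: "nat set \<Rightarrow> (nat \<Rightarrow> selector) \<Rightarrow> nat set set \<Rightarrow> nat set \<Rightarrow> nat \<Rightarrow> nat set" where
  "diag_seq s G F x 0 = {a\<in>x. less_sets s {a}}"
| "diag_seq s G F x (Suc k) = diag_step s G F (diag_seq s G F x k)"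

definition diag_point :: "nat set \<Rightarrow> (nat \<Rightarrow> selector) \<Rightarrow> nat set set \<Rightarrow> nat set \<Rightarrow> nat \<Rightarrow> nat" where
  "diag_point s G F x k = (LEAST a. a \<in> diag_seq s G F x k)"

text \<open>Phrased with \<open>is_least\<close> rather than \<open>LEAST\<close> to keep it a countable Boolean
  combination of memberships.\<close>
definition stage_colour ::
  "nat set set \<Rightarrow> nat set \<Rightarrow> (nat \<Rightarrow> selector) \<Rightarrow> nat set set \<Rightarrow> nat set \<Rightarrow> nat \<Rightarrow> bool" where
  "stage_colour B s G F x k \<longleftrightarrow>
     (\<forall>a. is_least a (diag_seq s G F x k) \<longrightarrow>
        (\<forall>v. finite v \<and> v \<subseteq> diag_seq s G F x (Suc k) \<and> less_sets (insert a s) v \<and>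
             insert a s \<union> v \<in> B \<longrightarrow> insert a s \<union> v \<in> F))"

definition diag_select :: "nat set set \<Rightarrow> nat set \<Rightarrow> (nat \<Rightarrow> selector) \<Rightarrow> selector" where
  "diag_select B s G F x =
     {a. \<exists>k. is_least a (diag_seq s G F x k) \<and>
            (stage_colour B s G F x k \<longleftrightarrow> infinite {k. stage_colour B s G F x k})}"

definition homogenizer :: "nat set set \<Rightarrow> nat set \<Rightarrow> selector" where
  "homogenizer B = wfrec (front_tree_succ B)
     (\<lambda>h s. if s \<in> front_tree B then diag_select B s (\<lambda>a. h (insert a s)) else (\<lambda>F x. x))"

subsection \<open>The tree of a front\<close>

lemma init_seg_trans: "init_seg a b \<Longrightarrow> init_seg b c \<Longrightarrow> init_seg a c"
  unfolding init_seg_def by (metis Int_assoc greaterThan_Int_greaterThan)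

lemma finite_front_tree: "is_front B \<Longrightarrow> s \<in> front_tree B \<Longrightarrow> finite s"
  unfolding front_tree_def is_front_def init_seg_def by auto

lemma front_tree_not_in_front: "is_front B \<Longrightarrow> s \<in> front_tree B \<Longrightarrow> s \<notin> B"
  unfolding front_tree_def is_front_def by blast

lemma front_treeI:
  assumes "finite u" "u \<noteq> {}" "less_sets s u" "s \<union> u \<in> B"
  shows "s \<in> front_tree B"
proof -
  have "a < Min u" if "a \<in> s" for a
    using assms(3) Min_in[OF assms(1,2)] that by (auto simp: less_sets_def)
  then have "(s \<union> u) \<inter> {..<Min u} = s"
    using Min_le[OF assms(1)] by (auto dest: leD)
  moreover have "s \<noteq> s \<union> u"
    using assms(1-3) by (auto simp: less_sets_def)
  ultimately show ?thesis
    unfolding front_tree_def init_seg_def using assms(4) by blast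
qed

lemma finite_subset_incseq:
  fixes f :: "nat \<Rightarrow> 'a set"
  assumes "incseq f" "finite c" "c \<subseteq> (\<Union>i. f i)"
  obtains i where "c \<subseteq> f i"
proof -
  have "f i \<subseteq> f j \<or> f j \<subseteq> f i" for i j
    using assms(1) nat_le_linear[of i j] by (auto dest: monoD)
  then have "subset.chain UNIV (range f)"
    by (auto simp: subset_chain_def)
  then show ?thesis
    using finite_subset_Union_chain[OF assms(2,3)] that by blast
qed

text \<open>
  An infinite descending chain in the tree would build up an infinite set none of whose initial
  segments lies in the front.
\<close>
lemma wf_front_tree_succ:
  assumes front: "is_front B"
  shows "wf (front_tree_succ B)"
proof (rule ccontr)
  assume "\<not> wf (front_tree_succ B)"
  then obtain f where chain: "\<And>i. (f (Suc i), f i) \<in> front_tree_succ B"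
    using wf_iff_no_infinite_down_chain by blast
  then have tree: "f i \<in> front_tree B" for i
    by (auto simp: front_tree_succ_def)
  obtain a where a: "\<And>i. less_sets (f i) {a i} \<and> f (Suc i) = insert (a i) (f i)"
    using chain by (simp add: front_tree_succ_def) metis
  have inc: "incseq f"
    using a by (auto intro: incseq_SucI)
  define y where "y = (\<Union>i. f i)"
  have "infinite y"
  proof
    assume "finite y"
    then obtain i where "y \<subseteq> f i"
      using finite_subset_incseq[OF inc] by (auto simp: y_def)
    moreover have "a i \<in> y" "a i \<notin> f i"
      using a[of i] by (auto simp: y_def less_sets_def)
    ultimately show False by blast
  qed
  then obtain b m where b: "b \<in> B" "b = y \<inter> {..<m}"
    using front unfolding is_front_def init_seg_def by blast
  then obtain i where "b \<subseteq> f i"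
    using finite_subset_incseq[OF inc] front by (auto simp: y_def is_front_def)
  then have "b = f i \<inter> {..<m}"
    using b(2) by (auto simp: y_def)
  moreover obtain b' where b': "b' \<in> B" "init_seg (f i) b'" "f i \<noteq> b'"
    using tree[of i] unfolding front_tree_def by blast
  ultimately have "init_seg b b'"
    using init_seg_trans[of b "f i" b'] by (auto simp: init_seg_def)
  then have "b = b'"
    using front b(1) b'(1) unfolding is_front_def by blast
  then show False
    using \<open>b \<subseteq> f i\<close> b' by (auto simp: init_seg_def)
qed

lemma homogeneous_off_front_tree:
  assumes "s \<notin> front_tree B"
  shows "homogeneous B s F y"
proof -
  have "u = {}" if "finite u" "less_sets s u" "s \<union> u \<in> B" for u
    using front_treeI[OF that(1) _ that(2,3)] assms by blast
  then show ?thesis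
    unfolding homogeneous_def by (cases "s \<in> F") auto
qed

lemma homogeneous_empty_node:
  assumes "homogeneous B {} F y" "F \<subseteq> B"
  shows "{s. finite s \<and> s \<subseteq> y} \<inter> B \<subseteq> F \<or> {s. finite s \<and> s \<subseteq> y} \<inter> F = {}"
  using assms by (auto simp: homogeneous_def less_sets_def)

subsection \<open>The diagonal construction at one node\<close>

lemma diag_select_cong:
  assumes "\<And>a. less_sets s {a} \<Longrightarrow> G a = G' a"
  shows "diag_select B s G = diag_select B s G'"
proof -
  have "diag_step s G F z = diag_step s G' F z" for F z
    by (simp add: diag_step_def assms)
  then have "diag_seq s G F x k = diag_seq s G' F x k" for F x k
    by (induction k) simp_all
  then have "diag_seq s G = diag_seq s G'"
    by (simp add: fun_eq_iff)
  then show ?thesis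
    unfolding diag_select_def stage_colour_def by simp
qed

lemma is_least_iff_eq_Least: "a \<in> z \<Longrightarrow> is_least b z \<longleftrightarrow> b = (LEAST a. a \<in> z)"
  unfolding is_least_def by (metis LeastI Least_le leD le_neq_implies_less)

lemma mem_diag_step_iff:
  "n \<in> diag_step s G F z \<longleftrightarrow> (\<exists>a. is_least a z \<and> less_sets s {a} \<and> n \<in> G a F (z - {a}))"
proof (cases "z = {}")
  case False
  then obtain y where "y \<in> z" by blast
  then show ?thesis using False by (simp add: diag_step_def is_least_iff_eq_Least)
qed (simp add: diag_step_def is_least_def)

locale diagonalisation =
  fixes s :: "nat set" and G :: "nat \<Rightarrow> selector" and F :: "nat set set"
  assumes G_subset: "\<And>a z. less_sets s {a} \<Longrightarrow> G a F z \<subseteq> z"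
begin

lemma diag_step_subset: "diag_step s G F z \<subseteq> z"
  using G_subset by (auto simp: diag_step_def)

lemma diag_seq_antimono: "i \<le> j \<Longrightarrow> diag_seq s G F x j \<subseteq> diag_seq s G F x i"
  by (rule lift_Suc_antimono_le[of "diag_seq s G F x"]) (simp_all add: diag_step_subset)

lemma diag_select_subset: "diag_select B s G F x \<subseteq> x"
  using diag_seq_antimono[of 0] by (fastforce simp: diag_select_def is_least_def)

end

locale infinite_diagonalisation = diagonalisation +
  fixes x :: "nat set"
  assumes finite_s: "finite s" and infinite_x: "infinite x"
    and G_infinite: "\<And>a z. less_sets s {a} \<Longrightarrow> infinite z \<Longrightarrow> infinite (G a F z)"
begin

abbreviation "z \<equiv> diag_seq s G F x"
abbreviation "n \<equiv> diag_point s G F x"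

lemma infinite_diag_seq_0: "infinite (z 0)"
proof
  assume "finite (z 0)"
  moreover have "x \<subseteq> z 0 \<union> (\<Union>b\<in>s. {..b})"
    by (auto simp: less_sets_def not_less)
  ultimately show False
    using infinite_x finite_s by (meson finite_UN_I finite_Un finite_atMost finite_subset)
qed

lemma diag_point_in: "infinite (z k) \<Longrightarrow> n k \<in> z k"
  unfolding diag_point_def by (metis LeastI finite.emptyI ex_in_conv)

lemma diag_point_le: "b \<in> z k \<Longrightarrow> n k \<le> b"
  unfolding diag_point_def by (rule Least_le)

lemma less_sets_diag_point: "infinite (z k) \<Longrightarrow> less_sets s {n k}"
  using diag_point_in diag_seq_antimono[of 0 k] by auto

lemma diag_seq_Suc_eq: "infinite (z k) \<Longrightarrow> z (Suc k) = G (n k) F (z k - {n k})"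
  using diag_point_in less_sets_diag_point by (auto simp: diag_step_def diag_point_def)

lemma infinite_diag_seq: "infinite (z k)"
proof (induction k)
  case 0
  then show ?case by (rule infinite_diag_seq_0)
next
  case (Suc k)
  then show ?case
    using diag_seq_Suc_eq less_sets_diag_point G_infinite by (metis infinite_remove)
qed

lemma diag_seq_Suc_subset: "z (Suc k) \<subseteq> z k - {n k}"
  using diag_seq_Suc_eq[OF infinite_diag_seq]
    G_subset[OF less_sets_diag_point[OF infinite_diag_seq]]
  by simp

lemma is_least_diag_seq_iff: "is_least a (z k) \<longleftrightarrow> a = n k"
  using is_least_iff_eq_Least[OF diag_point_in[OF infinite_diag_seq]] by (simp add: diag_point_def)

lemma strict_mono_diag_point: "strict_mono n"
proof (rule strict_monoI_Suc)
  fix k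
  have "n (Suc k) \<in> z k - {n k}"
    using diag_point_in[OF infinite_diag_seq] diag_seq_Suc_subset by blast
  then show "n k < n (Suc k)"
    using diag_point_le[of "n (Suc k)" k] by force
qed

lemma diag_select_eq:
  "diag_select B s G F x =
     n ` {k. stage_colour B s G F x k = infinite {k. stage_colour B s G F x k}}"
  unfolding diag_select_def is_least_diag_seq_iff by auto

lemma infinite_diag_select: "infinite (diag_select B s G F x)"
proof -
  let ?C = "stage_colour B s G F x"
  have "infinite {k. ?C k = infinite {k. ?C k}}"
  proof (cases "infinite {k. ?C k}")
    case False
    then have "{k. ?C k = infinite {k. ?C k}} = UNIV - {k. ?C k}" by auto
    then show ?thesis using False by (simp add: Diff_infinite_finite)
  qed simp
  then show ?thesis
    unfolding diag_select_eq
    using finite_imageD strict_mono_imp_inj_on[OF strict_mono_diag_point] inj_on_subset by blast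
qed

lemma stage_colour_iff:
  "stage_colour B s G F x k \<longleftrightarrow>
     (\<forall>v. finite v \<and> v \<subseteq> z (Suc k) \<and> less_sets (insert (n k) s) v \<and>
          insert (n k) s \<union> v \<in> B \<longrightarrow> insert (n k) s \<union> v \<in> F)"
  unfolding stage_colour_def is_least_diag_seq_iff by simp

lemma diag_point_split:
  assumes u: "finite u" "u \<noteq> {}" "u \<subseteq> n ` K" "less_sets s u"
  obtains i where "i \<in> K" "n i \<in> u" "u - {n i} \<subseteq> z (Suc i)"
    "less_sets (insert (n i) s) (u - {n i})"
proof -
  obtain i where i: "i \<in> K" "n i = Min u"
    using Min_in[OF u(1,2)] u(3) by auto
  have "u - {n i} \<subseteq> z (Suc i)"
  proof
    fix w assume w: "w \<in> u - {n i}"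
    then obtain j where j: "w = n j"
      using u(3) by auto
    have "n i < w"
      using w u(1) i(2) by (simp add: order.not_eq_order_implies_strict)
    then have "Suc i \<le> j"
      using j strict_mono_less[OF strict_mono_diag_point] by simp
    then show "w \<in> z (Suc i)"
      using diag_seq_antimono j diag_point_in[OF infinite_diag_seq] by blast
  qed
  moreover have "less_sets (insert (n i) s) (u - {n i})"
    using u(1,4) i(2) by (auto simp: less_sets_def order.not_eq_order_implies_strict)
  ultimately show thesis
    using that i Min_in[OF u(1,2)] by simp
qed

lemma homogeneous_diag_select:
  assumes s_notin: "s \<notin> B"
    and G_homogeneous:
      "\<And>a z. less_sets s {a} \<Longrightarrow> infinite z \<Longrightarrow> homogeneous B (insert a s) F (G a F z)"
  shows "homogeneous B s F (diag_select B s G F x)"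
proof -
  let ?C = "stage_colour B s G F x"
  let ?c = "infinite {k. ?C k}"
  have "s \<union> u \<in> F \<longleftrightarrow> ?c"
    if u: "finite u" "u \<subseteq> n ` {k. ?C k = ?c}" "less_sets s u" "s \<union> u \<in> B" for u
  proof -
    have "u \<noteq> {}" using u(4) s_notin by auto
    then obtain i where i: "?C i = ?c" "n i \<in> u"
      "u - {n i} \<subseteq> z (Suc i)" "less_sets (insert (n i) s) (u - {n i})"
      using diag_point_split[OF u(1) _ u(2,3)] by blast
    have u_eq: "s \<union> u = insert (n i) s \<union> (u - {n i})"
      using i(2) by auto
    show ?thesis
    proof (cases "?C i")
      case True
      then show ?thesis using i u(1,4) u_eq stage_colour_iff by auto
    next
      case False
      \<comment> \<open>one extension of \<open>s \<union> {n i}\<close> into \<open>z (Suc i)\<close> misses \<open>F\<close>, so by homogeneity all do\<close>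
      then obtain v where "finite v" "v \<subseteq> z (Suc i)" "less_sets (insert (n i) s) v"
        "insert (n i) s \<union> v \<in> B" "insert (n i) s \<union> v \<notin> F"
        using stage_colour_iff by auto
      moreover have "homogeneous B (insert (n i) s) F (z (Suc i))"
        using diag_seq_Suc_eq[OF infinite_diag_seq] G_homogeneous
          less_sets_diag_point[OF infinite_diag_seq] infinite_diag_seq[of i]
        by (simp add: infinite_remove)
      ultimately have "s \<union> u \<notin> F"
        using i u(1,4) u_eq unfolding homogeneous_def by (metis finite_Diff)
      then show ?thesis using False i(1) by simp
    qed
  qed
  then show ?thesis
    unfolding homogeneous_def diag_select_eq by (cases ?c) auto
qed

end

lemma homogenizer_unfold:
  assumes front: "is_front B"
  shows "homogenizer B s =
    (if s \<in> front_tree B then diag_select B s (\<lambda>a. homogenizer B (insert a s)) else (\<lambda>F x. x))"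
proof -
  have "homogenizer B s = (if s \<in> front_tree B
      then diag_select B s (\<lambda>a. cut (homogenizer B) (front_tree_succ B) s (insert a s))
      else (\<lambda>F x. x))"
    unfolding homogenizer_def by (subst wfrec[OF wf_front_tree_succ[OF front]]) simp
  also have "\<dots> = (if s \<in> front_tree B
      then diag_select B s (\<lambda>a. homogenizer B (insert a s)) else (\<lambda>F x. x))"
    by (auto intro!: diag_select_cong cut_apply simp: front_tree_succ_def)
  finally show ?thesis .
qed

lemma homogenizer_subset:
  assumes front: "is_front B"
  shows "homogenizer B s F x \<subseteq> x"
proof (induction s arbitrary: F x rule: wf_induct[OF wf_front_tree_succ[OF front]])
  case (1 s)
  then show ?case
    by (auto simp: homogenizer_unfold[OF front] front_tree_succ_def
        intro!: diagonalisation.diag_select_subset diagonalisation.intro)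
qed

lemma homogenizer_homogeneous:
  assumes front: "is_front B" and "infinite x"
  shows "infinite (homogenizer B s F x) \<and> homogeneous B s F (homogenizer B s F x)"
  using \<open>infinite x\<close>
proof (induction s arbitrary: x rule: wf_induct[OF wf_front_tree_succ[OF front]])
  case (1 s)
  show ?case
  proof (cases "s \<in> front_tree B")
    case False
    then show ?thesis
      using 1(2) by (simp add: homogenizer_unfold[OF front] homogeneous_off_front_tree)
  next
    case True
    let ?G = "\<lambda>a. homogenizer B (insert a s)"
    have IH: "infinite (?G a F z) \<and> homogeneous B (insert a s) F (?G a F z)"
      if "less_sets s {a}" "infinite z" for a z
      using 1(1) that True by (auto simp: front_tree_succ_def)
    interpret infinite_diagonalisation s ?G F x
      using homogenizer_subset[OF front] finite_front_tree[OF front True] 1(2) IH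
      by unfold_locales auto
    show ?thesis
      using infinite_diag_select IH
        homogeneous_diag_select[OF front_tree_not_in_front[OF front True]]
      by (simp add: True homogenizer_unfold[OF front])
  qed
qed

subsection \<open>Measurability\<close>

text \<open>Quantifying over lists instead of finite sets makes the quantifier countable.\<close>
lemma stage_colour_as_lists:
  "stage_colour B s G F x k \<longleftrightarrow>
     (\<forall>a. is_least a (diag_seq s G F x k) \<longrightarrow>
        (\<forall>l. (\<forall>w\<in>set l. w \<in> diag_seq s G F x (Suc k)) \<and> less_sets (insert a s) (set l) \<and>
             insert a s \<union> set l \<in> B \<longrightarrow> insert a s \<union> set l \<in> F))"
proof -
  have "(\<forall>v. finite v \<and> v \<subseteq> Y \<and> P v \<longrightarrow> Q v) \<longleftrightarrow>
      (\<forall>l. (\<forall>w\<in>set l. w \<in> Y) \<and> P (set l) \<longrightarrow> Q (set l))"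
    for Y and P Q :: "nat set \<Rightarrow> bool"
    by (metis finite_list finite_set subset_code(1))
  then show ?thesis
    unfolding stage_colour_def by presburger
qed

lemma pred_is_least:
  assumes "\<And>n. Measurable.pred M (\<lambda>\<omega>. n \<in> Z \<omega>)"
  shows "Measurable.pred M (\<lambda>\<omega>. is_least a (Z \<omega>))"
  unfolding is_least_def by (intro pred_intros_logic pred_intros_countable pred_intros_imp' assms)

context
  fixes M :: "'a measure" and Fm :: "'a \<Rightarrow> nat set set"
  assumes pred_Fm: "\<And>b. Measurable.pred M (\<lambda>\<omega>. b \<in> Fm \<omega>)"
begin

context
  fixes s :: "nat set" and G :: "nat \<Rightarrow> selector" and Z :: "'a \<Rightarrow> nat set"
  assumes pred_G: "\<And>a Z n. less_sets s {a} \<Longrightarrow>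
      (\<And>n. Measurable.pred M (\<lambda>\<omega>. n \<in> Z \<omega>)) \<Longrightarrow>
      Measurable.pred M (\<lambda>\<omega>. n \<in> G a (Fm \<omega>) (Z \<omega>))"
    and pred_Z: "\<And>n. Measurable.pred M (\<lambda>\<omega>. n \<in> Z \<omega>)"
begin

lemma pred_mem_diag_seq: "Measurable.pred M (\<lambda>\<omega>. n \<in> diag_seq s G (Fm \<omega>) (Z \<omega>) k)"
proof (induction k arbitrary: n)
  case 0
  show ?case using pred_Z by (simp add: pred_intros_conj2')
next
  case (Suc k)
  have pred_remove: "Measurable.pred M (\<lambda>\<omega>. n \<in> diag_seq s G (Fm \<omega>) (Z \<omega>) k - {a})"
    for n a
    using Suc by (cases "n = a") (simp_all add: measurable_const)
  show ?case
    unfolding diag_seq.simps mem_diag_step_iff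
    by (intro pred_intros_countable pred_intros_logic(3)[OF pred_is_least[OF Suc]]
        pred_intros_conj1' pred_G pred_remove)
qed

lemma pred_stage_colour: "Measurable.pred M (\<lambda>\<omega>. stage_colour B s G (Fm \<omega>) (Z \<omega>) k)"
  unfolding stage_colour_as_lists
  by (intro pred_intros_countable pred_intros_logic pred_is_least pred_mem_diag_seq
      pred_intros_finite pred_Fm pred_intros_conj2' finite_set)

lemma pred_mem_diag_select: "Measurable.pred M (\<lambda>\<omega>. n \<in> diag_select B s G (Fm \<omega>) (Z \<omega>))"
proof -
  have "Measurable.pred M (\<lambda>\<omega>. finite {k. stage_colour B s G (Fm \<omega>) (Z \<omega>) k})"
    unfolding finite_nat_set_iff_bounded_le Ball_def mem_Collect_eq
    by (intro pred_intros_countable pred_intros_logic(4) pred_stage_colour measurable_const) simp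
  then show ?thesis
    unfolding diag_select_def mem_Collect_eq
    by (intro pred_intros_countable pred_intros_logic pred_is_least pred_mem_diag_seq
        pred_stage_colour)
qed

end

lemma pred_mem_homogenizer:
  assumes front: "is_front B" and "\<And>n. Measurable.pred M (\<lambda>\<omega>. n \<in> Z \<omega>)"
  shows "Measurable.pred M (\<lambda>\<omega>. n \<in> homogenizer B s (Fm \<omega>) (Z \<omega>))"
  using assms(2)
proof (induction s arbitrary: Z n rule: wf_induct[OF wf_front_tree_succ[OF front]])
  case (1 s)
  show ?case
  proof (cases "s \<in> front_tree B")
    case True
    have "Measurable.pred M (\<lambda>\<omega>. n \<in> homogenizer B (insert a s) (Fm \<omega>) (Z' \<omega>))"
      if "less_sets s {a}" "\<And>n. Measurable.pred M (\<lambda>\<omega>. n \<in> Z' \<omega>)" for a Z' n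
      using 1(1) that True by (auto simp: front_tree_succ_def)
    then show ?thesis
      using True 1(2) pred_mem_diag_select by (simp add: homogenizer_unfold[OF front])
  qed (use 1(2) in \<open>simp add: homogenizer_unfold[OF front]\<close>)
qed

end

subsection \<open>Borel measurability into the space of infinite sets\<close>

lemma space_borel_of: "space (borel_of X) = topspace X"
  and sets_borel_of: "sets (borel_of X) = sigma_sets (topspace X) {U. openin X U}"
proof -
  have "{U. openin X U} \<subseteq> Pow (topspace X)"
    using openin_subset by blast
  then show "space (borel_of X) = topspace X"
    and "sets (borel_of X) = sigma_sets (topspace X) {U. openin X U}"
    by (simp_all add: borel_of_def)
qed

lemma pred_borel_of:
  assumes "continuous_map X (discrete_topology UNIV) P"
  shows "Measurable.pred (borel_of X) P"
proof -
  have "openin X {\<omega> \<in> topspace X. P \<omega> \<in> {True}}"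
    by (rule openin_continuous_map_preimage[OF assms]) simp
  then show ?thesis
    unfolding pred_def space_borel_of sets_borel_of by (auto intro: sigma_sets.Basic)
qed

lemma topspace_cantor_top: "topspace (cantor_top I) = {f. \<forall>i. i \<notin> I \<longrightarrow> f i = undefined}"
  by (auto simp: cantor_top_def PiE_def extensional_def)

lemma continuous_map_cantor_top_coordinate:
  "i \<in> I \<Longrightarrow> continuous_map (cantor_top I) (discrete_topology UNIV) (\<lambda>f. f i)"
  unfolding cantor_top_def by (rule continuous_map_product_projection)

lemma topspace_inf_subsets_top: "topspace inf_subsets_top = {f. infinite {n. f n}}"
  by (simp add: inf_subsets_top_def topspace_cantor_top)

lemma continuous_map_inf_subsets_top_coordinate:
  "continuous_map inf_subsets_top (discrete_topology UNIV) (\<lambda>f. f n)"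
  unfolding inf_subsets_top_def
  by (intro continuous_map_from_subtopology continuous_map_cantor_top_coordinate) simp

definition cylinder :: "bool list \<Rightarrow> (nat \<Rightarrow> bool) set" where
  "cylinder bs = {h \<in> topspace inf_subsets_top. \<forall>k<length bs. h k = bs ! k}"

text \<open>Cylinders form a countable base, so preimages of open sets are countable unions.\<close>
lemma openin_inf_subsets_top_Union_cylinders:
  assumes "openin inf_subsets_top U"
  shows "U = (\<Union>bs\<in>{bs. cylinder bs \<subseteq> U}. cylinder bs)"
proof (intro equalityI subsetI)
  fix h assume "h \<in> U"
  obtain V where V: "openin (cantor_top UNIV) V" "U = V \<inter> {f. infinite {n. f n}}"
    using assms unfolding inf_subsets_top_def openin_subtopology by blast
  moreover have "h \<in> V"
    using \<open>h \<in> U\<close> V(2) by blast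
  ultimately obtain W where W: "finite {i. W i \<noteq> UNIV}" "h \<in> Pi\<^sub>E UNIV W" "Pi\<^sub>E UNIV W \<subseteq> V"
    unfolding cantor_top_def openin_product_topology_alt by auto
  obtain N where N: "{i. W i \<noteq> UNIV} \<subseteq> {..<N}"
    using W(1) finite_nat_iff_bounded by blast
  let ?bs = "map h [0..<N]"
  have "cylinder ?bs \<subseteq> U"
  proof
    fix h' assume h': "h' \<in> cylinder ?bs"
    have "h' i \<in> W i" for i
    proof (cases "W i = UNIV")
      case False
      then have "h' i = h i"
        using h' N by (auto simp: cylinder_def)
      then show ?thesis
        using W(2) by (auto simp: PiE_UNIV_domain)
    qed simp
    then show "h' \<in> U"
      using W(3) V(2) h' by (auto simp: cylinder_def topspace_inf_subsets_top PiE_UNIV_domain)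
  qed
  moreover have "h \<in> cylinder ?bs"
    using \<open>h \<in> U\<close> V(2) by (auto simp: cylinder_def topspace_inf_subsets_top)
  ultimately show "h \<in> (\<Union>bs\<in>{bs. cylinder bs \<subseteq> U}. cylinder bs)" by blast
qed auto

lemma measurable_borel_of_inf_subsets_top:
  assumes \<Phi>: "\<Phi> \<in> space M \<rightarrow> topspace inf_subsets_top"
    and coord: "\<And>n. Measurable.pred M (\<lambda>\<omega>. \<Phi> \<omega> n)"
  shows "\<Phi> \<in> M \<rightarrow>\<^sub>M borel_of inf_subsets_top"
  unfolding borel_of_def
proof (rule measurable_measure_of)
  show "{U. openin inf_subsets_top U} \<subseteq> Pow (topspace inf_subsets_top)"
    using openin_subset by blast
  fix U assume "U \<in> {U. openin inf_subsets_top U}"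
  then have U: "U = (\<Union>bs\<in>{bs. cylinder bs \<subseteq> U}. cylinder bs)"
    using openin_inf_subsets_top_Union_cylinders by blast
  have "\<Phi> -` cylinder bs \<inter> space M \<in> sets M" for bs
  proof -
    have "\<Phi> -` cylinder bs \<inter> space M = {\<omega> \<in> space M. \<forall>k<length bs. \<Phi> \<omega> k = bs ! k}"
      using \<Phi> by (auto simp: cylinder_def)
    also have "\<dots> \<in> sets M"
      unfolding pred_def[symmetric]
      by (intro pred_intros_countable pred_intros_imp' pred_intros_logic coord measurable_const)
        simp
    finally show ?thesis .
  qed
  then have "(\<Union>bs\<in>{bs. cylinder bs \<subseteq> U}. \<Phi> -` cylinder bs \<inter> space M) \<in> sets M"
    by (intro countable_Un_Int(1))
  then show "\<Phi> -` U \<inter> space M \<in> sets M"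
    by (subst U) (simp only: vimage_UN UN_extend_simps(4))
qed (use \<Phi> in simp)

theorem mainTheorem7:
  assumes "is_front B"
  shows "\<exists>S :: nat set set \<Rightarrow> nat set \<Rightarrow> nat set.
    (\<lambda>(f, g). (\<lambda>n. n \<in> S {b\<in>B. f b} {n. g n}))
      \<in> borel_of (prod_topology (cantor_top B) inf_subsets_top) \<rightarrow>\<^sub>M borel_of inf_subsets_top
    \<and> (\<forall>x F. infinite x \<and> F \<subseteq> B \<longrightarrow>
         S F x \<subseteq> x \<and> infinite (S F x) \<and>
         ({s. finite s \<and> s \<subseteq> S F x} \<inter> B \<subseteq> F \<or>
          {s. finite s \<and> s \<subseteq> S F x} \<inter> F = {}))"
proof (intro exI conjI allI impI)
  let ?X = "prod_topology (cantor_top B) inf_subsets_top"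
  let ?S = "homogenizer B {}"
  have pred_F: "Measurable.pred (borel_of ?X) (\<lambda>\<omega>. b \<in> {b\<in>B. fst \<omega> b})" for b
    using pred_borel_of[OF continuous_map_compose[OF continuous_map_fst
        continuous_map_cantor_top_coordinate]]
    by (cases "b \<in> B") (simp_all add: o_def)
  have pred_x: "Measurable.pred (borel_of ?X) (\<lambda>\<omega>. n \<in> {n. snd \<omega> n})" for n
    using pred_borel_of[OF continuous_map_compose[OF continuous_map_snd
        continuous_map_inf_subsets_top_coordinate]]
    by (simp add: o_def)
  show "(\<lambda>(f, g). (\<lambda>n. n \<in> ?S {b\<in>B. f b} {n. g n}))
      \<in> borel_of ?X \<rightarrow>\<^sub>M borel_of inf_subsets_top"
    using homogenizer_homogeneous[OF assms]
      pred_mem_homogenizer[OF pred_F assms pred_x]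
    by (intro measurable_borel_of_inf_subsets_top)
       (auto simp: case_prod_beta space_borel_of topspace_inf_subsets_top)
  fix x :: "nat set" and F :: "nat set set"
  assume "infinite x \<and> F \<subseteq> B"
  then show "?S F x \<subseteq> x" "infinite (?S F x)"
    "{s. finite s \<and> s \<subseteq> ?S F x} \<inter> B \<subseteq> F \<or> {s. finite s \<and> s \<subseteq> ?S F x} \<inter> F = {}"
    using homogenizer_subset[OF assms] homogenizer_homogeneous[OF assms] homogeneous_empty_node
    by blast+
qed

end
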